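(* Let $\mathcal V$ be a multivector field on $X$, assume $X$ is invariant, and let $A\subset X$ be a nonempty invariant set. Then $A$ is minimal if and only if $A$ is strongly connected.
   Context: $X$ is a finite $T_0$ topological space. For $A\subset X$, $\operatorname{cl}A$ is its closure and $\operatorname{mo}A:=\operatorname{cl}A\setminus A$. $A$ is locally closed if it is the intersection of an open and a closed subset of $X$. $H$ denotes relative singular homology. A multivector is a nonempty locally closed subset of $X$; a multivector field $\mathcal V$ on $X$ is a partition of $X$ into multivectors. For $x\in X$, $[x]$ denotes the element of $\mathcal V$ containing $x$. A multivector $V$ is critical if $H(\operatorname{cl}V,\operatorname{mo}V)\neq0$, regular otherwise. Put $\Pi_{\mathcal V}(x):=[x]\cup\operatorname{cl}\{x\}$ and $\Pi_{\mathcal V}(A):=\bigcup_{x\in A}\Pi_{\mathcal V}(x)$. A $\mathbb Z$-interval is $\mathbb Z\cap I$ for a real interval $I$. A solution in $A\subset X$ is a map $\varphi:D\to A$ on a $\mathbb Z$-interval $D$ with $\varphi(i+1)\in\Pi_{\mathcal V}(\varphi(i))$ whenever $i,i+1\in D$; it is full if $D=\mathbb Z$, and a path if $D$ is bounded, going from $\varphi(\min D)$ to $\varphi(\max D)$. A full solution $\varphi$ is essential if for every $t\in\mathbb Z$ with $[\varphi(t)]$ regular, the set $\{s\in\mathbb Z:\varphi(s)\notin[\varphi(t)]\}$ is unbounded below and unbounded above. $\operatorname{Inv}A$ is the set of $x\in A$ such that there is an essential full solution $\varphi$ with image in $A$ and $\varphi(0)=x$; $A$ is invariant if $\operatorname{Inv}A=A$.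 A nonempty set $A$ is strongly connected if for all $x,y\in A$ there is a path in $A$ from $x$ to $y$. For an invariant set $A$, a subset $B\subset A$ is an attractor in $A$ if $B$ is invariant and every path in $A$ starting in $B$ has image in $B$ (equivalently $\Pi_{\mathcal V}(B)\cap A\subset B$). An invariant set $A$ is minimal if the only nonempty attractor in $A$ is $A$ itself. *)

theory Defs
  imports "HOL-Analysis.Analysis" "HOL-Homology.Homology"
begin

definition locally_closed_in :: "'a topology \<Rightarrow> 'a set \<Rightarrow> bool" where
  "locally_closed_in X A \<longleftrightarrow> (\<exists>U C. openin X U \<and> closedin X C \<and> A = U \<inter> C)"

definition mouth :: "'a topology \<Rightarrow> 'a set \<Rightarrow> 'a set" where
  "mouth X A = X closure_of A - A"

definition multivector :: "'a topology \<Rightarrow> 'a set \<Rightarrow> bool" where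
  "multivector X V \<longleftrightarrow> V \<noteq> {} \<and> locally_closed_in X V"

definition multivector_field :: "'a topology \<Rightarrow> 'a set set \<Rightarrow> bool" where
  "multivector_field X \<V> \<longleftrightarrow>
     (\<forall>V\<in>\<V>. multivector X V) \<and> \<Union>\<V> = topspace X \<and>
     (\<forall>V\<in>\<V>. \<forall>W\<in>\<V>. V \<noteq> W \<longrightarrow> V \<inter> W = {})"

definition mv_class :: "'a set set \<Rightarrow> 'a \<Rightarrow> 'a set" where
  "mv_class \<V> x = (THE V. V \<in> \<V> \<and> x \<in> V)"

definition critical :: "'a topology \<Rightarrow> 'a set \<Rightarrow> bool" where
  "critical X V \<longleftrightarrow>
     \<not> (\<forall>p. trivial_group (relative_homology_group p (subtopology X (X closure_of V)) (mouth X V)))"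

definition regular :: "'a topology \<Rightarrow> 'a set \<Rightarrow> bool" where
  "regular X V \<longleftrightarrow> \<not> critical X V"

definition Pi_mv :: "'a topology \<Rightarrow> 'a set set \<Rightarrow> 'a \<Rightarrow> 'a set" where
  "Pi_mv X \<V> x = mv_class \<V> x \<union> X closure_of {x}"

definition Z_interval :: "int set \<Rightarrow> bool" where
  "Z_interval D \<longleftrightarrow> (\<exists>I::real set. is_interval I \<and> D = {k. real_of_int k \<in> I})"

definition solution :: "'a topology \<Rightarrow> 'a set set \<Rightarrow> 'a set \<Rightarrow> int set \<Rightarrow> (int \<Rightarrow> 'a) \<Rightarrow> bool" where
  "solution X \<V> A D \<phi> \<longleftrightarrow> Z_interval D \<and> \<phi> ` D \<subseteq> A \<and>
     (\<forall>i. i \<in> D \<and> i + 1 \<in> D \<longrightarrow> \<phi> (i + 1) \<in> Pi_mv X \<V> (\<phi> i))"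

definition path_in :: "'a topology \<Rightarrow> 'a set set \<Rightarrow> 'a set \<Rightarrow> int set \<Rightarrow> (int \<Rightarrow> 'a) \<Rightarrow> bool" where
  "path_in X \<V> A D \<phi> \<longleftrightarrow> solution X \<V> A D \<phi> \<and> D \<noteq> {} \<and> bdd_above D \<and> bdd_below D"

definition essential :: "'a topology \<Rightarrow> 'a set set \<Rightarrow> (int \<Rightarrow> 'a) \<Rightarrow> bool" where
  "essential X \<V> \<phi> \<longleftrightarrow>
     (\<forall>t. regular X (mv_class \<V> (\<phi> t)) \<longrightarrow>
        (let S = {s. \<phi> s \<notin> mv_class \<V> (\<phi> t)} in \<not> bdd_below S \<and> \<not> bdd_above S))"

definition Inv :: "'a topology \<Rightarrow> 'a set set \<Rightarrow> 'a set \<Rightarrow> 'a set" where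
  "Inv X \<V> A = {x \<in> A. \<exists>\<phi>. solution X \<V> A UNIV \<phi> \<and> essential X \<V> \<phi> \<and> \<phi> 0 = x}"

definition invariant :: "'a topology \<Rightarrow> 'a set set \<Rightarrow> 'a set \<Rightarrow> bool" where
  "invariant X \<V> A \<longleftrightarrow> Inv X \<V> A = A"

definition strongly_connected :: "'a topology \<Rightarrow> 'a set set \<Rightarrow> 'a set \<Rightarrow> bool" where
  "strongly_connected X \<V> A \<longleftrightarrow> A \<noteq> {} \<and>
     (\<forall>x\<in>A. \<forall>y\<in>A. \<exists>D \<phi>. path_in X \<V> A D \<phi> \<and> \<phi> (Min D) = x \<and> \<phi> (Max D) = y)"

definition attractor_in :: "'a topology \<Rightarrow> 'a set set \<Rightarrow> 'a set \<Rightarrow> 'a set \<Rightarrow> bool" where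
  "attractor_in X \<V> A B \<longleftrightarrow> B \<subseteq> A \<and> invariant X \<V> B \<and>
     (\<forall>D \<phi>. path_in X \<V> A D \<phi> \<and> \<phi> (Min D) \<in> B \<longrightarrow> \<phi> ` D \<subseteq> B)"

definition minimal :: "'a topology \<Rightarrow> 'a set set \<Rightarrow> 'a set \<Rightarrow> bool" where
  "minimal X \<V> A \<longleftrightarrow> invariant X \<V> A \<and>
     (\<forall>B. attractor_in X \<V> A B \<and> B \<noteq> {} \<longrightarrow> B = A)"

end

theory Submission
  imports Defs
begin

text \<open>
  Reachability along \<open>x \<mapsto> \<Pi>(x)\<close> inside \<open>A\<close> is a preorder, and paths in \<open>A\<close> are exactly its
  finite chains. Since \<open>A\<close> is finite, some point \<open>x\<close> has a reachable set \<open>C\<close> of least size; then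
  every point of \<open>C\<close> reaches back to \<open>x\<close>, so \<open>C\<close> is forward closed and strongly connected.
  \<open>C\<close> is invariant: as \<open>\<Pi>\<close> is reflexive, through each point of \<open>C\<close> there is a closed walk
  covering \<open>C\<close>, and running it periodically gives a full solution. That solution is essential
  unless \<open>C\<close> lies in one regular multivector, which cannot happen, because the essential
  solution of \<open>A\<close> through a point of \<open>C\<close> never leaves \<open>C\<close> in forward time. So \<open>C\<close> is an
  attractor in \<open>A\<close>, and minimality forces \<open>C = A\<close>. Conversely, in a strongly connected set
  every point is reached by a path from a point of any nonempty attractor.
\<close>

definition walk :: "('a \<Rightarrow> 'a \<Rightarrow> bool) \<Rightarrow> 'a list \<Rightarrow> 'a \<Rightarrow> 'a \<Rightarrow> bool" where
  "walk r xs a b \<longleftrightarrow> xs \<noteq> [] \<and> hd xs = a \<and> last xs = b \<and> successively r xs"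

lemma successively_nth:
  assumes "successively P xs" "Suc i < length xs"
  shows "P (xs ! i) (xs ! Suc i)"
  using assms
  by (induction P xs arbitrary: i rule: successively.induct) (auto simp: less_Suc_eq_0_disj)

lemma successively_rtranclp_nth:
  assumes "successively r xs" "i < length xs"
  shows "r\<^sup>*\<^sup>* (xs ! 0) (xs ! i)"
  using assms
  by (induction i) (auto intro: rtranclp.rtrancl_into_rtrancl successively_nth)

lemma walk_imp_rtranclp:
  assumes "walk r xs a b" "y \<in> set xs"
  shows "r\<^sup>*\<^sup>* a y"
  using assms successively_rtranclp_nth[of r xs]
  by (auto simp: walk_def in_set_conv_nth hd_conv_nth)

lemma rtranclp_imp_walk:
  assumes "r\<^sup>*\<^sup>* a b"
  shows "\<exists>xs. walk r xs a b"
  using assms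
proof (induction rule: converse_rtranclp_induct)
  case base
  have "walk r [b] b b" by (simp add: walk_def)
  then show ?case ..
next
  case (step a c)
  then obtain xs where "walk r xs c b" by blast
  with step.hyps(1) have "walk r (a # xs) a b" by (auto simp: walk_def successively_Cons)
  then show ?case ..
qed

lemma walk_append:
  assumes "walk r xs a b" "walk r ys b c" "r b b"
  shows "walk r (xs @ ys) a c"
  using assms by (auto simp: walk_def successively_append_iff)

lemma closed_walk_covering:
  assumes "finite S" "r w w"
    and "\<And>c. c \<in> S \<Longrightarrow> r c c \<and> r\<^sup>*\<^sup>* w c \<and> r\<^sup>*\<^sup>* c w"
  shows "\<exists>xs. walk r xs w w \<and> S \<subseteq> set xs"
  using assms
proof (induction S rule: finite_induct)
  case empty
  have "walk r [w] w w" by (simp add: walk_def)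
  then show ?case by blast
next
  case (insert c S)
  then obtain xs where xs: "walk r xs w w" "S \<subseteq> set xs" by blast
  have c: "r c c" "r\<^sup>*\<^sup>* w c" "r\<^sup>*\<^sup>* c w" using insert.prems(2) by blast+
  obtain ys zs where ys: "walk r ys w c" and zs: "walk r zs c w"
    using rtranclp_imp_walk[OF c(2)] rtranclp_imp_walk[OF c(3)] by blast
  have "walk r (xs @ ys @ zs) w w"
    using walk_append[OF xs(1) walk_append[OF ys zs c(1)] insert.prems(1)] .
  moreover have "c \<in> set zs" using zs by (auto simp: walk_def)
  ultimately show ?case using xs(2) by (intro exI[of _ "xs @ ys @ zs"]) auto
qed

lemma finite_exists_terminal_point:
  assumes "finite A" "A \<noteq> {}" "\<And>x y. r x y \<Longrightarrow> y \<in> A"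
  shows "\<exists>x\<in>A. \<forall>y. r\<^sup>*\<^sup>* x y \<longrightarrow> r\<^sup>*\<^sup>* y x"
proof -
  define reach where "reach x = {y. r\<^sup>*\<^sup>* x y}" for x
  have reach_subset: "reach x \<subseteq> A" if "x \<in> A" for x
    using that assms(3) by (auto simp: reach_def elim: rtranclp.cases)
  obtain x where "x \<in> A" and least: "\<And>y. y \<in> A \<Longrightarrow> card (reach x) \<le> card (reach y)"
    using ex_has_least_nat[of "\<lambda>x. x \<in> A" _ "\<lambda>x. card (reach x)"] assms(2) by blast
  have "r\<^sup>*\<^sup>* y x" if "r\<^sup>*\<^sup>* x y" for y
  proof -
    have "y \<in> reach x" using that by (simp add: reach_def)
    then have "y \<in> A" using reach_subset \<open>x \<in> A\<close> by blast
    have sub: "reach y \<subseteq> reach x"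
      using that by (auto simp: reach_def intro: rtranclp_trans)
    have "finite (reach x)" using reach_subset \<open>x \<in> A\<close> assms(1) finite_subset by blast
    then have "reach y = reach x"
      using card_subset_eq[OF _ sub] least[OF \<open>y \<in> A\<close>] card_mono[OF _ sub] by simp
    then show ?thesis by (simp add: reach_def set_eq_iff)
  qed
  with \<open>x \<in> A\<close> show ?thesis by blast
qed

lemma unbounded_residue_class:
  fixes P m :: int
  assumes "0 < P"
  shows "\<not> bdd_above {s. s mod P = m mod P} \<and> \<not> bdd_below {s. s mod P = m mod P}"
proof -
  let ?S = "{s. s mod P = m mod P}"
  have mem: "m + P * k \<in> ?S" for k by simp
  have far: "B < m + P * k \<and> m + P * (- k) < B" if k: "k = \<bar>B - m\<bar> + 1" for B k
  proof -
    have "1 * k \<le> P * k" using assms by (intro mult_right_mono) (auto simp: k)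
    moreover have "\<bar>B - m\<bar> < k" by (simp add: k)
    ultimately have "B < m + P * k" "m - P * k < B"
      using abs_ge_self[of "B - m"] abs_ge_minus_self[of "B - m"] by linarith+
    then show ?thesis by simp
  qed
  show ?thesis
  proof
    show "\<not> bdd_above ?S"
    proof
      assume "bdd_above ?S"
      then obtain B where B: "\<And>s. s \<in> ?S \<Longrightarrow> s \<le> B" by (auto simp: bdd_above_def)
      have "m + P * (\<bar>B - m\<bar> + 1) \<le> B" by (rule B[OF mem])
      with far[of "\<bar>B - m\<bar> + 1" B] show False by linarith
    qed
    show "\<not> bdd_below ?S"
    proof
      assume "bdd_below ?S"
      then obtain B where B: "\<And>s. s \<in> ?S \<Longrightarrow> B \<le> s" by (auto simp: bdd_below_def)
      have "B \<le> m + P * (- (\<bar>B - m\<bar> + 1))" by (rule B[OF mem])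
      with far[of "\<bar>B - m\<bar> + 1" B] show False by linarith
    qed
  qed
qed

definition cyclic_sequence :: "'a list \<Rightarrow> int \<Rightarrow> 'a" where
  "cyclic_sequence zs s = zs ! nat (s mod int (length zs))"

lemma cyclic_sequence_in_set: "zs \<noteq> [] \<Longrightarrow> cyclic_sequence zs s \<in> set zs"
  by (simp add: cyclic_sequence_def nat_less_iff)

lemma cyclic_sequence_residue:
  "i < length zs \<Longrightarrow> s mod int (length zs) = int i mod int (length zs) \<Longrightarrow> cyclic_sequence zs s = zs ! i"
  by (simp add: cyclic_sequence_def)

lemma cyclic_sequence_Suc:
  assumes "zs \<noteq> []"
  obtains i where "i < length zs" "cyclic_sequence zs s = zs ! i"
    "cyclic_sequence zs (s + 1) = zs ! (Suc i mod length zs)"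
proof
  let ?P = "int (length zs)"
  define i where "i = nat (s mod ?P)"
  show "i < length zs" using assms by (simp add: i_def nat_less_iff)
  show "cyclic_sequence zs s = zs ! i" by (simp add: cyclic_sequence_def i_def)
  have "s mod ?P = int i" using assms by (simp add: i_def)
  have "(s + 1) mod ?P = (s mod ?P + 1) mod ?P" by (rule mod_add_left_eq[symmetric])
  also have "\<dots> = (1 + int i) mod ?P" using \<open>s mod ?P = int i\<close> by (simp add: add.commute)
  also have "\<dots> = int (Suc i mod length zs)" by (simp add: of_nat_mod)
  finally have "(s + 1) mod ?P = int (Suc i mod length zs)" .
  then show "cyclic_sequence zs (s + 1) = zs ! (Suc i mod length zs)"
    unfolding cyclic_sequence_def by (simp only: nat_int)
qed

lemma solution_cyclic_sequence:
  assumes "zs \<noteq> []" "set zs \<subseteq> C"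
    and "successively (\<lambda>a b. b \<in> Pi_mv X \<V> a) zs" "hd zs \<in> Pi_mv X \<V> (last zs)"
  shows "solution X \<V> C UNIV (cyclic_sequence zs)"
  unfolding solution_def
proof (intro conjI allI impI)
  show "Z_interval UNIV" unfolding Z_interval_def by (intro exI[of _ UNIV]) auto
  show "range (cyclic_sequence zs) \<subseteq> C" using assms(1,2) cyclic_sequence_in_set by blast
  fix s :: int
  obtain i where i: "i < length zs" "cyclic_sequence zs s = zs ! i"
      "cyclic_sequence zs (s + 1) = zs ! (Suc i mod length zs)"
    using cyclic_sequence_Suc[OF assms(1)] .
  show "cyclic_sequence zs (s + 1) \<in> Pi_mv X \<V> (cyclic_sequence zs s)"
  proof (cases "Suc i < length zs")
    case True
    then show ?thesis using i successively_nth[OF assms(3) True] by simp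
  next
    case False
    then have "Suc i = length zs" using i(1) by simp
    then have "zs ! i = last zs" "Suc i mod length zs = 0"
      using assms(1) by (auto simp: last_conv_nth dest: sym)
    then show ?thesis using i assms(1,4) by (simp add: hd_conv_nth)
  qed
qed

lemma essential_cyclic_sequence:
  assumes "zs \<noteq> []"
    and "\<And>z. z \<in> set zs \<Longrightarrow> regular X (mv_class \<V> z) \<Longrightarrow> \<exists>z'\<in>set zs. z' \<notin> mv_class \<V> z"
  shows "essential X \<V> (cyclic_sequence zs)"
  unfolding essential_def Let_def
proof (intro allI impI)
  fix t
  let ?V = "mv_class \<V> (cyclic_sequence zs t)"
  let ?P = "int (length zs)"
  assume "regular X ?V"
  then obtain i where i: "i < length zs" "zs ! i \<notin> ?V"
    using assms(2)[OF cyclic_sequence_in_set[OF assms(1), of t]] by (auto simp: in_set_conv_nth)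
  have sub: "{s. s mod ?P = int i mod ?P} \<subseteq> {s. cyclic_sequence zs s \<notin> ?V}"
    using i cyclic_sequence_residue[OF i(1)] by auto
  have "\<not> bdd_above {s. s mod ?P = int i mod ?P}" "\<not> bdd_below {s. s mod ?P = int i mod ?P}"
    using unbounded_residue_class[of ?P "int i"] assms(1) by auto
  then show "\<not> bdd_below {s. cyclic_sequence zs s \<notin> ?V} \<and> \<not> bdd_above {s. cyclic_sequence zs s \<notin> ?V}"
    using bdd_above_mono[OF _ sub] bdd_below_mono[OF _ sub] by (intro conjI notI) auto
qed

definition mv_step :: "'a topology \<Rightarrow> 'a set set \<Rightarrow> 'a set \<Rightarrow> 'a \<Rightarrow> 'a \<Rightarrow> bool" where
  "mv_step X \<V> A a b \<longleftrightarrow> a \<in> A \<and> b \<in> A \<and> b \<in> Pi_mv X \<V> a"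

lemma mv_step_refl:
  assumes "A \<subseteq> topspace X" "a \<in> A"
  shows "mv_step X \<V> A a a"
proof -
  have "a \<in> X closure_of {a}" using assms closure_of_subset[of "{a}" X] by auto
  then show ?thesis using assms(2) by (simp add: mv_step_def Pi_mv_def)
qed

lemma mv_step_rtranclp_mem: "(mv_step X \<V> A)\<^sup>*\<^sup>* a b \<Longrightarrow> a \<in> A \<Longrightarrow> b \<in> A"
  by (induction rule: rtranclp_induct) (auto simp: mv_step_def)

lemma path_in_domain:
  assumes "path_in X \<V> A D \<phi>"
  shows "finite D" "D = {Min D..Max D}"
proof -
  obtain I where I: "is_interval I" "D = {k. real_of_int k \<in> I}"
    using assms by (auto simp: path_in_def solution_def Z_interval_def)
  obtain lo hi where "\<forall>k\<in>D. lo \<le> k" "\<forall>k\<in>D. k \<le> hi"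
    using assms by (auto simp: path_in_def bdd_above_def bdd_below_def)
  then have "D \<subseteq> {lo..hi}" by auto
  then show "finite D" using finite_subset by blast
  then have "Min D \<in> D" "Max D \<in> D" using assms by (auto simp: path_in_def)
  have "{Min D..Max D} \<subseteq> D"
  proof
    fix k assume "k \<in> {Min D..Max D}"
    then have "real_of_int (Min D) \<le> real_of_int k" "real_of_int k \<le> real_of_int (Max D)" by auto
    moreover have "real_of_int (Min D) \<in> I" "real_of_int (Max D) \<in> I"
      using \<open>Min D \<in> D\<close> \<open>Max D \<in> D\<close> I(2) by auto
    ultimately show "k \<in> D" using I unfolding is_interval_1 by blast
  qed
  moreover have "D \<subseteq> {Min D..Max D}" using \<open>finite D\<close> by auto
  ultimately show "D = {Min D..Max D}" by blast
qed

lemma path_in_Max_mem: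
  assumes "path_in X \<V> A D \<phi>"
  shows "Max D \<in> D"
  using path_in_domain(1)[OF assms] assms by (auto simp: path_in_def)

lemma path_in_rtranclp:
  assumes "path_in X \<V> A D \<phi>" "i \<in> D"
  shows "(mv_step X \<V> A)\<^sup>*\<^sup>* (\<phi> (Min D)) (\<phi> i)"
proof -
  have mem: "k \<in> D \<longleftrightarrow> Min D \<le> k \<and> k \<le> Max D" for k
    using eqset_imp_iff[OF path_in_domain(2)[OF assms(1)], of k] by simp
  have edge: "mv_step X \<V> A (\<phi> j) (\<phi> (j + 1))" if "j \<in> D" "j + 1 \<in> D" for j
    using assms(1) that by (auto simp: path_in_def solution_def mv_step_def)
  have "Min D \<le> i" using assms(2) mem by blast
  then have "i \<le> Max D \<longrightarrow> (mv_step X \<V> A)\<^sup>*\<^sup>* (\<phi> (Min D)) (\<phi> i)"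
  proof (induction i rule: int_ge_induct)
    case (step j)
    show ?case
    proof
      assume "j + 1 \<le> Max D"
      then have "j \<in> D" "j + 1 \<in> D" using step.hyps mem by auto
      moreover have "(mv_step X \<V> A)\<^sup>*\<^sup>* (\<phi> (Min D)) (\<phi> j)"
        using step.IH \<open>j + 1 \<le> Max D\<close> by simp
      ultimately show "(mv_step X \<V> A)\<^sup>*\<^sup>* (\<phi> (Min D)) (\<phi> (j + 1))"
        using edge by (blast intro: rtranclp.rtrancl_into_rtrancl)
    qed
  qed simp
  then show ?thesis using assms(2) mem by blast
qed

lemma walk_imp_path_in:
  assumes "walk (mv_step X \<V> A) xs a b" "a \<in> A"
  shows "\<exists>D \<phi>. path_in X \<V> A D \<phi> \<and> \<phi> (Min D) = a \<and> \<phi> (Max D) = b"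
proof -
  define n where "n = length xs - 1"
  define D where "D = {0..int n}"
  define \<phi> where "\<phi> i = xs ! nat i" for i
  have xs: "0 < length xs" "xs ! 0 = a" "xs ! n = b" "successively (mv_step X \<V> A) xs"
    using assms(1) by (auto simp: walk_def n_def hd_conv_nth last_conv_nth)
  have "set xs \<subseteq> A"
    using assms walk_imp_rtranclp mv_step_rtranclp_mem by fast
  moreover have "\<phi> i \<in> set xs" if "i \<in> D" for i
  proof -
    have "nat i \<le> n" using that by (simp add: D_def nat_le_iff)
    then have "nat i < length xs" using xs(1) unfolding n_def by linarith
    then show ?thesis by (simp add: \<phi>_def)
  qed
  ultimately have "\<phi> ` D \<subseteq> A" by blast
  moreover have "Z_interval D"
    unfolding Z_interval_def D_def by (intro exI[of _ "{0..real n}"]) auto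
  moreover have "\<phi> (i + 1) \<in> Pi_mv X \<V> (\<phi> i)" if "i \<in> D" "i + 1 \<in> D" for i
  proof -
    have "Suc (nat i) < length xs" "nat (i + 1) = Suc (nat i)"
      using that xs(1) by (auto simp: D_def n_def)
    then show ?thesis
      using successively_nth[OF xs(4)] by (auto simp: \<phi>_def mv_step_def)
  qed
  ultimately have "path_in X \<V> A D \<phi>"
    by (auto simp: path_in_def solution_def D_def)
  moreover have "Min D = 0" "Max D = int n" unfolding D_def by (auto intro: Min_eqI Max_eqI)
  moreover have "\<phi> 0 = a" "\<phi> (int n) = b" using xs(2,3) by (simp_all add: \<phi>_def)
  ultimately show ?thesis by metis
qed

lemma strongly_connected_iff_rtranclp:
  "strongly_connected X \<V> A \<longleftrightarrow> A \<noteq> {} \<and> (\<forall>a\<in>A. \<forall>b\<in>A. (mv_step X \<V> A)\<^sup>*\<^sup>* a b)"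
proof -
  have "(mv_step X \<V> A)\<^sup>*\<^sup>* a b \<longleftrightarrow>
      (\<exists>D \<phi>. path_in X \<V> A D \<phi> \<and> \<phi> (Min D) = a \<and> \<phi> (Max D) = b)" if "a \<in> A" for a b
    using that path_in_rtranclp path_in_Max_mem rtranclp_imp_walk walk_imp_path_in by metis
  then show ?thesis by (auto simp: strongly_connected_def)
qed

lemma strongly_connected_imp_minimal:
  assumes "invariant X \<V> A" "strongly_connected X \<V> A"
  shows "minimal X \<V> A"
  unfolding minimal_def
proof (intro conjI allI impI)
  fix B
  assume B: "attractor_in X \<V> A B \<and> B \<noteq> {}"
  then obtain b where "b \<in> B" "b \<in> A" by (auto simp: attractor_in_def)
  have "a \<in> B" if "a \<in> A" for a
  proof -
    obtain D \<phi> where "path_in X \<V> A D \<phi>" "\<phi> (Min D) = b" "\<phi> (Max D) = a"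
      using assms(2) \<open>b \<in> A\<close> \<open>a \<in> A\<close> unfolding strongly_connected_def by blast
    then show ?thesis
      using B \<open>b \<in> B\<close> path_in_Max_mem unfolding attractor_in_def by blast
  qed
  with B show "B = A" by (auto simp: attractor_in_def)
qed (rule assms(1))

lemma terminal_component_not_in_regular_class:
  assumes "invariant X \<V> A" "C \<subseteq> A" "c \<in> C" "regular X (mv_class \<V> c)"
    and closed: "\<And>y z. y \<in> C \<Longrightarrow> mv_step X \<V> A y z \<Longrightarrow> z \<in> C"
  shows "\<exists>c'\<in>C. c' \<notin> mv_class \<V> c"
proof (rule ccontr)
  assume "\<not> ?thesis"
  then have C_sub: "C \<subseteq> mv_class \<V> c" by blast
  have "c \<in> Inv X \<V> A" using assms(1-3) by (auto simp: invariant_def)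
  then obtain \<phi> where sol: "solution X \<V> A UNIV \<phi>" and ess: "essential X \<V> \<phi>" and "\<phi> 0 = c"
    by (auto simp: Inv_def)
  have forward: "\<phi> (int n) \<in> C" for n
  proof (induction n)
    case 0
    show ?case using \<open>\<phi> 0 = c\<close> assms(3) by simp
  next
    case (Suc n)
    have "mv_step X \<V> A (\<phi> (int n)) (\<phi> (int n + 1))"
      using sol by (auto simp: solution_def mv_step_def)
    then show ?case using closed[OF Suc.IH] by (simp add: add.commute)
  qed
  have sub: "{s. \<phi> s \<notin> mv_class \<V> (\<phi> 0)} \<subseteq> {..0}"
  proof
    fix s assume "s \<in> {s. \<phi> s \<notin> mv_class \<V> (\<phi> 0)}"
    moreover have "\<phi> s \<in> mv_class \<V> (\<phi> 0)" if "0 \<le> s"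
      using forward[of "nat s"] that C_sub \<open>\<phi> 0 = c\<close> by auto
    ultimately show "s \<in> {..0}" by force
  qed
  have "\<not> bdd_above {s. \<phi> s \<notin> mv_class \<V> (\<phi> 0)}"
    using ess assms(4) \<open>\<phi> 0 = c\<close> by (auto simp: essential_def Let_def)
  then show False using bdd_above_mono[OF bdd_above_Iic sub] by contradiction
qed

lemma invariant_terminal_component:
  assumes "invariant X \<V> A" "A \<subseteq> topspace X" "finite C" "C \<subseteq> A"
    and closed: "\<And>y z. y \<in> C \<Longrightarrow> mv_step X \<V> A y z \<Longrightarrow> z \<in> C"
    and connected: "\<And>u v. u \<in> C \<Longrightarrow> v \<in> C \<Longrightarrow> (mv_step X \<V> A)\<^sup>*\<^sup>* u v"
  shows "invariant X \<V> C"
proof -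
  let ?r = "mv_step X \<V> A"
  have refl: "?r c c" if "c \<in> C" for c using assms(4) that by (intro mv_step_refl[OF assms(2)]) blast
  have "w \<in> Inv X \<V> C" if "w \<in> C" for w
  proof -
    have "\<exists>zs. walk ?r zs w w \<and> C \<subseteq> set zs"
    proof (rule closed_walk_covering[of C ?r w])
      show "finite C" "?r w w" using assms(3) refl[OF \<open>w \<in> C\<close>] .
      show "?r c c \<and> ?r\<^sup>*\<^sup>* w c \<and> ?r\<^sup>*\<^sup>* c w" if "c \<in> C" for c
        using refl[OF that] connected[OF \<open>w \<in> C\<close> that] connected[OF that \<open>w \<in> C\<close>] by blast
    qed
    then obtain zs where zs: "walk ?r zs w w" "C \<subseteq> set zs" by blast
    have "set zs \<subseteq> C"
    proof
      fix y assume "y \<in> set zs"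
      then have "?r\<^sup>*\<^sup>* w y" by (rule walk_imp_rtranclp[OF zs(1)])
      then show "y \<in> C"
        by (induction rule: rtranclp_induct) (use \<open>w \<in> C\<close> closed in blast)+
    qed
    have "zs \<noteq> []" "hd zs = w" "last zs = w" "successively ?r zs"
      using zs(1) by (auto simp: walk_def)
    have "successively (\<lambda>a b. b \<in> Pi_mv X \<V> a) zs"
      using \<open>successively ?r zs\<close> by (rule successively_mono) (simp add: mv_step_def)
    moreover have "w \<in> Pi_mv X \<V> w" using refl[OF \<open>w \<in> C\<close>] by (simp add: mv_step_def)
    ultimately have "solution X \<V> C UNIV (cyclic_sequence zs)"
      using solution_cyclic_sequence[OF \<open>zs \<noteq> []\<close> \<open>set zs \<subseteq> C\<close>] \<open>hd zs = w\<close> \<open>last zs = w\<close>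
      by simp
    moreover have "\<exists>z'\<in>set zs. z' \<notin> mv_class \<V> z"
      if z: "z \<in> set zs" "regular X (mv_class \<V> z)" for z
    proof -
      have "z \<in> C" using \<open>set zs \<subseteq> C\<close> z(1) by (rule subsetD)
      then have "\<exists>c'\<in>C. c' \<notin> mv_class \<V> z"
        by (rule terminal_component_not_in_regular_class[OF assms(1,4) _ z(2) closed])
      then show ?thesis using zs(2) by auto
    qed
    then have "essential X \<V> (cyclic_sequence zs)"
      by (rule essential_cyclic_sequence[OF \<open>zs \<noteq> []\<close>])
    moreover have "cyclic_sequence zs 0 = w"
      using \<open>zs \<noteq> []\<close> \<open>hd zs = w\<close> by (simp add: cyclic_sequence_def hd_conv_nth)
    ultimately show ?thesis using \<open>w \<in> C\<close> by (auto simp: Inv_def)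
  qed
  then show ?thesis by (auto simp: invariant_def Inv_def)
qed

lemma minimal_imp_strongly_connected:
  assumes "finite A" "A \<subseteq> topspace X" "A \<noteq> {}" "minimal X \<V> A"
  shows "strongly_connected X \<V> A"
proof -
  let ?r = "mv_step X \<V> A"
  have "\<exists>x\<in>A. \<forall>y. ?r\<^sup>*\<^sup>* x y \<longrightarrow> ?r\<^sup>*\<^sup>* y x"
    by (rule finite_exists_terminal_point[OF assms(1,3)]) (simp add: mv_step_def)
  then obtain x where "x \<in> A" and terminal: "\<And>y. ?r\<^sup>*\<^sup>* x y \<Longrightarrow> ?r\<^sup>*\<^sup>* y x"
    by blast
  define C where "C = {y. ?r\<^sup>*\<^sup>* x y}"
  have "C \<subseteq> A" using mv_step_rtranclp_mem \<open>x \<in> A\<close> by (auto simp: C_def)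
  have closed: "z \<in> C" if "y \<in> C" "?r y z" for y z
    using that by (auto simp: C_def)
  have connected: "?r\<^sup>*\<^sup>* u v" if "u \<in> C" "v \<in> C" for u v
    using that terminal rtranclp_trans[of ?r u x v] by (simp add: C_def)
  have "invariant X \<V> A" using assms(4) by (simp add: minimal_def)
  moreover have "finite C" using \<open>C \<subseteq> A\<close> assms(1) by (rule finite_subset)
  ultimately have "invariant X \<V> C"
    using invariant_terminal_component[OF _ assms(2) _ \<open>C \<subseteq> A\<close>] closed connected by blast
  moreover have "\<phi> ` D \<subseteq> C" if "path_in X \<V> A D \<phi>" "\<phi> (Min D) \<in> C" for D \<phi>
    using that path_in_rtranclp rtranclp_trans[of ?r x "\<phi> (Min D)"] by (fastforce simp: C_def)
  ultimately have "attractor_in X \<V> A C"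
    using \<open>C \<subseteq> A\<close> by (auto simp: attractor_in_def)
  then have "C = A" using assms(4) \<open>x \<in> A\<close> by (auto simp: minimal_def C_def)
  then show ?thesis using connected assms(3) by (simp add: strongly_connected_iff_rtranclp)
qed

theorem proposition6p7:
  fixes X :: "'a topology" and \<V> :: "'a set set" and A :: "'a set"
  assumes "finite (topspace X)" and "t0_space X"
    and "multivector_field X \<V>"
    and "invariant X \<V> (topspace X)"
    and "A \<subseteq> topspace X" and "A \<noteq> {}" and "invariant X \<V> A"
  shows "minimal X \<V> A \<longleftrightarrow> strongly_connected X \<V> A"
proof -
  have "finite A" using assms(1,5) finite_subset by blast
  then show ?thesis
    using minimal_imp_strongly_connected strongly_connected_imp_minimal assms(5-7) by blast
qed

end
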